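(* Let $X$ be a Baire space, $Y$ a topological space, $(Z,d)$ a metric space and $f:X\times Y\to Z$ a mapping. Suppose $f^y$ is quasicontinuous for every $y\in Y$, and there is a dense set $D\subset Y$ such that for every $y\in D$: (i) there is a dense Baire subspace $Q_y$ of $X$ such that $f_x$ is cliquish at $y$ for every $x\in Q_y$, and (ii) some neighborhood of $y$ in $Y$ has a countable pseudobase. Then $f$ is cliquish (at every point of $X\times Y$).
   Context: $f_x(y)=f^y(x)=f(x,y)$. A mapping $g$ is quasicontinuous at $a$ if for each neighborhood $U$ of $a$ and neighborhood $W$ of $g(a)$ there is an open $O$ with $\emptyset\ne O\subset U$ and $g(O)\subset W$; quasicontinuous means at every point. A mapping $g$ from a space $T$ into $(Z,d)$ is cliquish at $t$ if for each $\varepsilon>0$ and each neighborhood $U$ of $t$ there is an open $O$ with $\emptyset\ne O\subset U$ and $\mathrm{diam}(g(O))\le\varepsilon$; cliquish means at every point (for $f$, with $T=X\times Y$ with the product topology). A pseudobase of a space is a collection of nonempty open sets such that every nonempty open set contains one of them. *)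

theory Defs
  imports "HOL-Analysis.Analysis"
begin

definition Baire_space :: "'a topology \<Rightarrow> bool" where
  "Baire_space T \<longleftrightarrow>
     (\<forall>\<G>. countable \<G> \<and> (\<forall>G\<in>\<G>. openin T G \<and> T closure_of G = topspace T)
        \<longrightarrow> T closure_of (topspace T \<inter> \<Inter>\<G>) = topspace T)"

definition quasicontinuous_at :: "'a topology \<Rightarrow> ('a \<Rightarrow> 'c::topological_space) \<Rightarrow> 'a \<Rightarrow> bool" where
  "quasicontinuous_at T g a \<longleftrightarrow>
     (\<forall>U W. openin T U \<and> a \<in> U \<and> open W \<and> g a \<in> W \<longrightarrow>
        (\<exists>V. openin T V \<and> V \<noteq> {} \<and> V \<subseteq> U \<and> g ` V \<subseteq> W))"

definition quasicontinuous :: "'a topology \<Rightarrow> ('a \<Rightarrow> 'c::topological_space) \<Rightarrow> bool" where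
  "quasicontinuous T g \<longleftrightarrow> (\<forall>a\<in>topspace T. quasicontinuous_at T g a)"

text \<open>Cliquishness; diam(g(O)) \<le> e is written out as a bound on all pairwise distances.\<close>
definition cliquish_at :: "'a topology \<Rightarrow> ('a \<Rightarrow> 'c::metric_space) \<Rightarrow> 'a \<Rightarrow> bool" where
  "cliquish_at T g t \<longleftrightarrow>
     (\<forall>e>0. \<forall>U. openin T U \<and> t \<in> U \<longrightarrow>
        (\<exists>V. openin T V \<and> V \<noteq> {} \<and> V \<subseteq> U \<and> (\<forall>u\<in>V. \<forall>v\<in>V. dist (g u) (g v) \<le> e)))"

definition cliquish :: "'a topology \<Rightarrow> ('a \<Rightarrow> 'c::metric_space) \<Rightarrow> bool" where
  "cliquish T g \<longleftrightarrow> (\<forall>t\<in>topspace T. cliquish_at T g t)"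

definition pseudobase :: "'a topology \<Rightarrow> 'a set set \<Rightarrow> bool" where
  "pseudobase T \<B> \<longleftrightarrow> (\<forall>B\<in>\<B>. openin T B \<and> B \<noteq> {}) \<and>
     (\<forall>U. openin T U \<and> U \<noteq> {} \<longrightarrow> (\<exists>B\<in>\<B>. B \<subseteq> U))"

end

theory Submission
  imports Defs
begin

(* Fix a point (x0, y0), an open box U0 \<times> V0 around it and e > 0.  Since D is
   dense we may pick y \<in> D \<inter> V0, with its dense Baire subspace Q and a countable pseudobase
   \<B> of a neighbourhood of y.
   (1) For every x \<in> Q \<inter> U0 the section f_x is cliquish at y, so some B \<in> \<B> inside V0 has
       f_x-oscillation \<le> e on B.  Hence the countably many sets
       A_B = {x \<in> Q \<inter> U0. osc of f_x on B \<le> e} cover Q \<inter> U0, and the Baire property of Q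
       makes one A_B dense in some nonempty open G \<subseteq> U0 of X.
   (2) Quasicontinuity of the horizontal sections f^v transports this bound from the dense set
       A_B to a whole box G1 \<times> B with G1 \<subseteq> G, at the price of a factor 4.
   The file first proves the Baire-category step in general form, then the two facts about
   pseudobases and density it needs, then steps (1) and (2), and finally the theorem. *)

definition dense_within :: "'a topology \<Rightarrow> 'a set \<Rightarrow> 'a set \<Rightarrow> bool" where
  "dense_within X A G \<longleftrightarrow> (\<forall>H. openin X H \<and> H \<noteq> {} \<and> H \<subseteq> G \<longrightarrow> H \<inter> A \<noteq> {})"

lemma dense_within_mono: "dense_within X A G \<Longrightarrow> G' \<subseteq> G \<Longrightarrow> A \<subseteq> A' \<Longrightarrow> dense_within X A' G'"
  unfolding dense_within_def by blast

lemma Baire_space_cover_somewhere_dense: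
  assumes Baire: "Baire_space T" and "countable \<A>"
    and S: "openin T S" "S \<noteq> {}" and cover: "S \<subseteq> \<Union>\<A>"
  shows "\<exists>A\<in>\<A>. T interior_of (T closure_of A) \<inter> S \<noteq> {}"
proof (rule ccontr)
  assume nowhere: "\<not> ?thesis"
  define \<G> where "\<G> = (\<lambda>A. topspace T - T closure_of (A \<inter> S)) ` \<A>"
  have open_dense: "openin T G \<and> T closure_of G = topspace T" if "G \<in> \<G>" for G
  proof -
    obtain A where A: "A \<in> \<A>" and G: "G = topspace T - T closure_of (A \<inter> S)"
      using \<open>G \<in> \<G>\<close> unfolding \<G>_def by blast
    define I where "I = T interior_of (T closure_of (A \<inter> S))"
    have "openin T I" unfolding I_def by simp
    have "I \<subseteq> T closure_of (A \<inter> S)" unfolding I_def by (rule interior_of_subset)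
    also have "\<dots> \<subseteq> T closure_of S" by (simp add: closure_of_mono)
    finally have "I \<subseteq> T closure_of S" .
    have "I \<subseteq> T interior_of (T closure_of A)"
      unfolding I_def by (simp add: closure_of_mono interior_of_mono)
    with nowhere A have "I \<inter> S = {}" by blast
    then have "I = {}"
      using \<open>I \<subseteq> T closure_of S\<close> openin_Int_closure_of_eq_empty[OF \<open>openin T I\<close>] by blast
    then show ?thesis
      using G closure_of_complement[of T "T closure_of (A \<inter> S)"] unfolding I_def by auto
  qed
  have "countable \<G>" using \<open>countable \<A>\<close> unfolding \<G>_def by simp
  then have "T closure_of (topspace T \<inter> \<Inter>\<G>) = topspace T"
    using Baire open_dense unfolding Baire_space_def by blast
  then have "(topspace T \<inter> \<Inter>\<G>) \<inter> S \<noteq> {}"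
    using S unfolding dense_intersects_open by blast
  then obtain x where x: "x \<in> S" "x \<in> topspace T" "x \<in> \<Inter>\<G>" by blast
  then obtain A where A: "A \<in> \<A>" "x \<in> A" using cover by blast
  then have "x \<in> T closure_of (A \<inter> S)"
    using closure_of_subset_Int[of T "A \<inter> S"] x by blast
  moreover have "topspace T - T closure_of (A \<inter> S) \<in> \<G>"
    using A unfolding \<G>_def by blast
  ultimately show False using x by blast
qed

lemma dense_within_from_dense_subspace:
  assumes Q: "X closure_of Q = topspace X" and I: "openin (subtopology X Q) I"
    and dense: "I \<subseteq> subtopology X Q closure_of A"
  obtains G where "openin X G" "G \<inter> Q = I" "dense_within X A G"
proof -
  obtain G where G: "openin X G" "I = G \<inter> Q" using I unfolding openin_subtopology by blast
  have "dense_within X A G"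
    unfolding dense_within_def
  proof (intro allI impI)
    fix H assume H: "openin X H \<and> H \<noteq> {} \<and> H \<subseteq> G"
    then have "H \<inter> Q \<noteq> {}" using Q dense_intersects_open by blast
    moreover have "H \<inter> Q \<subseteq> X closure_of A"
      using H G dense closure_of_subtopology_subset[of X Q A] by auto
    ultimately show "H \<inter> A \<noteq> {}"
      using openin_Int_closure_of_eq_empty[of X H A] H by blast
  qed
  then show thesis by (rule that[OF G(1) G(2)[symmetric]])
qed

lemma pseudobase_member_inside:
  assumes "pseudobase (subtopology Y N) \<B>" "openin Y V" "V \<subseteq> N"
    and H: "openin Y H" "H \<noteq> {}" "H \<subseteq> V"
  obtains B where "B \<in> \<B>" "openin Y B" "B \<noteq> {}" "B \<subseteq> H"
proof -
  have "openin (subtopology Y N) H"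
    unfolding openin_subtopology using H \<open>V \<subseteq> N\<close> by (intro exI[of _ H]) auto
  then obtain B where B: "B \<in> \<B>" "B \<subseteq> H" "openin (subtopology Y N) B" "B \<noteq> {}"
    using assms(1) H(2) unfolding pseudobase_def by blast
  then obtain G where G: "openin Y G" "B = G \<inter> N" unfolding openin_subtopology by blast
  then have "B = G \<inter> V" using B(2) H(3) \<open>V \<subseteq> N\<close> by auto
  then have "openin Y B" using G(1) \<open>openin Y V\<close> by auto
  then show thesis by (rule that[OF B(1) _ B(4,2)])
qed

lemma quasicontinuous_approx_on_dense:
  assumes "quasicontinuous_at X g x" "x \<in> G" "openin X G" "dense_within X A G" "\<delta> > 0"
  obtains x' where "x' \<in> A" "x' \<in> G" "dist (g x) (g x') < \<delta>"
proof -
  obtain H where H: "openin X H" "H \<noteq> {}" "H \<subseteq> G" "g ` H \<subseteq> ball (g x) \<delta>"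
    using assms(1)[unfolded quasicontinuous_at_def, rule_format, of G "ball (g x) \<delta>"] assms(2,3,5)
    by auto
  then obtain x' where x': "x' \<in> H" "x' \<in> A"
    using assms(4) unfolding dense_within_def by blast
  then have "dist (g x) (g x') < \<delta>" using H(4) by auto
  then show thesis using that x' H(3) by blast
qed

lemma Baire_slice_dense_within:
  assumes Q: "X closure_of Q = topspace X" "Baire_space (subtopology X Q)"
      "\<forall>x\<in>Q. cliquish_at Y (\<lambda>v. f (x, v)) y"
    and N: "openin Y V" "y \<in> V" "V \<subseteq> N" "countable \<B>" "pseudobase (subtopology Y N) \<B>"
    and box: "openin X U0" "U0 \<noteq> {}" "openin Y V0" "y \<in> V0" and "e > 0"
  obtains G B where "openin X G" "G \<noteq> {}" "G \<subseteq> U0" "openin Y B" "B \<noteq> {}" "B \<subseteq> V0"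
    "dense_within X {x. \<forall>u\<in>B. \<forall>v\<in>B. dist (f (x, u)) (f (x, v)) \<le> e} G"
proof -
  define small where "small B = {x \<in> Q \<inter> U0. \<forall>u\<in>B. \<forall>v\<in>B. dist (f (x, u)) (f (x, v)) \<le> e}"
    for B
  define \<B>' where "\<B>' = {B\<in>\<B>. openin Y B \<and> B \<noteq> {} \<and> B \<subseteq> V0}"
  have cover: "Q \<inter> U0 \<subseteq> \<Union>(small ` \<B>')"
  proof
    fix x assume x: "x \<in> Q \<inter> U0"
    have nbhd: "openin Y (V \<inter> V0) \<and> y \<in> V \<inter> V0" using N box by auto
    have "cliquish_at Y (\<lambda>v. f (x, v)) y" using Q(3) x by blast
    from this[unfolded cliquish_at_def, rule_format, OF \<open>e > 0\<close> nbhd]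
    obtain H where H: "openin Y H" "H \<noteq> {}" "H \<subseteq> V \<inter> V0"
        "\<forall>u\<in>H. \<forall>v\<in>H. dist (f (x, u)) (f (x, v)) \<le> e"
      by blast
    then obtain B where "B \<in> \<B>" "openin Y B" "B \<noteq> {}" "B \<subseteq> H"
      using pseudobase_member_inside[OF N(5,1,3), of H] by blast
    with H x show "x \<in> \<Union>(small ` \<B>')" unfolding small_def \<B>'_def by blast
  qed
  have QU0: "openin (subtopology X Q) (Q \<inter> U0)" "Q \<inter> U0 \<noteq> {}"
    using openin_subtopology_Int2[OF box(1)] box(1,2) Q(1) unfolding dense_intersects_open by auto
  have "countable (small ` \<B>')" using N(4) unfolding \<B>'_def by simp
  from Baire_space_cover_somewhere_dense[OF Q(2) this QU0 cover]
  obtain B where B: "B \<in> \<B>'"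
    and meets: "subtopology X Q interior_of (subtopology X Q closure_of small B) \<inter> (Q \<inter> U0) \<noteq> {}"
    by blast
  obtain G where G: "openin X G" "G \<inter> Q = subtopology X Q interior_of (subtopology X Q closure_of small B)"
      "dense_within X (small B) G"
    using dense_within_from_dense_subspace[OF Q(1) openin_interior_of interior_of_subset] by blast
  show thesis
  proof (rule that)
    show "openin X (G \<inter> U0)" using G(1) box(1) by blast
    show "G \<inter> U0 \<noteq> {}" using meets unfolding G(2)[symmetric] by blast
    show "G \<inter> U0 \<subseteq> U0" by blast
    show "openin Y B" "B \<noteq> {}" "B \<subseteq> V0" using B unfolding \<B>'_def by auto
    show "dense_within X {x. \<forall>u\<in>B. \<forall>v\<in>B. dist (f (x, u)) (f (x, v)) \<le> e} (G \<inter> U0)"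
      using G(3) by (rule dense_within_mono) (auto simp: small_def)
  qed
qed

lemma quasicontinuous_small_box:
  assumes qc: "\<forall>v\<in>B. quasicontinuous X (\<lambda>x. f (x, v))"
    and G: "openin X G" "G \<noteq> {}" and "B \<noteq> {}"
    and dense: "dense_within X {x. \<forall>u\<in>B. \<forall>v\<in>B. dist (f (x, u)) (f (x, v)) \<le> e} G"
    and "e > 0"
  obtains G1 where "openin X G1" "G1 \<noteq> {}" "G1 \<subseteq> G"
    "\<forall>p\<in>G1 \<times> B. \<forall>q\<in>G1 \<times> B. dist (f p) (f q) \<le> 4 * e"
proof -
  let ?A = "{x. \<forall>u\<in>B. \<forall>v\<in>B. dist (f (x, u)) (f (x, v)) \<le> e}"
  obtain y1 where y1: "y1 \<in> B" using \<open>B \<noteq> {}\<close> by blast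
  obtain x1 where x1: "x1 \<in> G" "x1 \<in> ?A" using dense G unfolding dense_within_def by blast
  have "quasicontinuous_at X (\<lambda>x. f (x, y1)) x1"
    using qc y1 x1 G(1) openin_subset unfolding quasicontinuous_def by blast
  obtain G1 where G1: "openin X G1" "G1 \<noteq> {}" "G1 \<subseteq> G"
      "(\<lambda>x. f (x, y1)) ` G1 \<subseteq> ball (f (x1, y1)) e"
    using \<open>quasicontinuous_at X (\<lambda>x. f (x, y1)) x1\<close>[unfolded quasicontinuous_at_def, rule_format,
        of G "ball (f (x1, y1)) e"] x1 G(1) \<open>e > 0\<close> by auto
  have near: "dist (f (x, v)) (f (x1, y1)) \<le> 2 * e" if "x \<in> G1" "v \<in> B" for x v
  proof (rule field_le_epsilon)
    fix \<delta> :: real assume "\<delta> > 0"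
    have "quasicontinuous_at X (\<lambda>x. f (x, v)) x"
      using qc that G1(1) openin_subset unfolding quasicontinuous_def by blast
    then obtain x' where x': "x' \<in> ?A" "x' \<in> G1" "dist (f (x, v)) (f (x', v)) < \<delta>"
      using quasicontinuous_approx_on_dense[OF _ \<open>x \<in> G1\<close> G1(1) _ \<open>\<delta> > 0\<close>]
        dense_within_mono[OF dense G1(3) order.refl] by blast
    have "dist (f (x', v)) (f (x', y1)) \<le> e" using x'(1) that y1 by blast
    moreover have "dist (f (x', y1)) (f (x1, y1)) < e"
      using G1(4) x'(2) by (force simp: dist_commute)
    ultimately show "dist (f (x, v)) (f (x1, y1)) \<le> 2 * e + \<delta>"
      using x'(3) dist_triangle[of "f (x, v)" "f (x1, y1)" "f (x', v)"]
        dist_triangle[of "f (x', v)" "f (x1, y1)" "f (x', y1)"] by linarith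
  qed
  have "dist (f p) (f q) \<le> 4 * e" if "p \<in> G1 \<times> B" "q \<in> G1 \<times> B" for p q
    using near[of "fst p" "snd p"] near[of "fst q" "snd q"] that
      dist_triangle[of "f p" "f q" "f (x1, y1)"] by (auto simp: dist_commute)
  with G1 that show thesis by blast
qed

theorem theorem4p2:
  fixes X :: "'a topology" and Y :: "'b topology"
    and f :: "'a \<times> 'b \<Rightarrow> 'c::metric_space" and D :: "'b set"
  assumes "Baire_space X"
    and "\<forall>y\<in>topspace Y. quasicontinuous X (\<lambda>x. f (x, y))"
    and "D \<subseteq> topspace Y" and "Y closure_of D = topspace Y"
    and "\<forall>y\<in>D. \<exists>Q. Q \<subseteq> topspace X \<and> X closure_of Q = topspace X \<and>
            Baire_space (subtopology X Q) \<and> (\<forall>x\<in>Q. cliquish_at Y (\<lambda>v. f (x, v)) y)"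
    and "\<forall>y\<in>D. \<exists>N V \<B>. openin Y V \<and> y \<in> V \<and> V \<subseteq> N \<and> N \<subseteq> topspace Y \<and>
            countable \<B> \<and> pseudobase (subtopology Y N) \<B>"
  shows "cliquish (prod_topology X Y) f"
  unfolding cliquish_def cliquish_at_def
proof (intro ballI allI impI)
  fix t e W
  assume "t \<in> topspace (prod_topology X Y)" and "(e::real) > 0"
    and W: "openin (prod_topology X Y) W \<and> t \<in> W"
  obtain U0 V0 where box: "openin X U0" "openin Y V0" "fst t \<in> U0" "snd t \<in> V0" "U0 \<times> V0 \<subseteq> W"
    using W unfolding openin_prod_topology_alt by (metis prod.collapse)
  obtain y where "y \<in> D" "y \<in> V0"
    using assms(4) box(2,4) unfolding dense_intersects_open by blast
  then obtain Q N V \<B> where "X closure_of Q = topspace X" "Baire_space (subtopology X Q)"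
      "\<forall>x\<in>Q. cliquish_at Y (\<lambda>v. f (x, v)) y" "openin Y V" "y \<in> V" "V \<subseteq> N"
      "countable \<B>" "pseudobase (subtopology Y N) \<B>"
    using assms(5,6) by blast
  from Baire_slice_dense_within[OF this box(1) _ box(2) \<open>y \<in> V0\<close>, of "e / 4"] box(3) \<open>e > 0\<close>
  obtain G B where GB: "openin X G" "G \<noteq> {}" "G \<subseteq> U0" "openin Y B" "B \<noteq> {}" "B \<subseteq> V0"
      "dense_within X {x. \<forall>u\<in>B. \<forall>v\<in>B. dist (f (x, u)) (f (x, v)) \<le> e / 4} G"
    by auto
  have "\<forall>v\<in>B. quasicontinuous X (\<lambda>x. f (x, v))"
    using assms(2) openin_subset[OF GB(4)] by blast
  from quasicontinuous_small_box[OF this GB(1,2,5,7)] \<open>e > 0\<close>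
  obtain G1 where "openin X G1" "G1 \<noteq> {}" "G1 \<subseteq> G"
      "\<forall>p\<in>G1 \<times> B. \<forall>q\<in>G1 \<times> B. dist (f p) (f q) \<le> 4 * (e / 4)"
    by auto
  with GB box show "\<exists>H. openin (prod_topology X Y) H \<and> H \<noteq> {} \<and> H \<subseteq> W \<and>
      (\<forall>u\<in>H. \<forall>v\<in>H. dist (f u) (f v) \<le> e)"
    by (intro exI[of _ "G1 \<times> B"]) (auto simp: openin_prod_Times_iff)
qed

end
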